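(* Let $n\ge 1$, $m\ge 1$ be integers and $\mathcal D$ a complex Hilbert space. For every $f\in H_m(\mathbb B,\mathcal D)$, \[ (M_z^*M_z)^{-1}(M_z^*f)=M_z^*\delta f . \] In particular, the row operator $\delta M_z: H_m(\mathbb B,\mathcal D)^n\to H_m(\mathbb B,\mathcal D)$, $(f_i)_{i=1}^n\mapsto \delta\big(\sum_{i=1}^n z_if_i\big)$, is a continuous linear extension of the operator $M_z(M_z^*M_z)^{-1}:\operatorname{Im}M_z^*\to H_m(\mathbb B,\mathcal D)$.
   Context: $\mathbb B=\{z\in\mathbb C^n:\|z\|<1\}$. For $\alpha\in\mathbb N^n$ write $|\alpha|=\alpha_1+\dots+\alpha_n$, $\alpha!=\alpha_1!\cdots\alpha_n!$, and for an integer $\ell\ge1$ set $\rho_\ell(\alpha)=\frac{(\ell+|\alpha|-1)!}{\alpha!(\ell-1)!}$. For a complex Hilbert space $\mathcal E$, $H_\ell(\mathbb B,\mathcal E)$ denotes the Hilbert space of analytic functions $f=\sum_\alpha f_\alpha z^\alpha:\mathbb B\to\mathcal E$ with $\|f\|^2=\sum_\alpha\|f_\alpha\|^2/\rho_\ell(\alpha)<\infty$ (equivalently, the $\mathcal E$-valued reproducing kernel Hilbert space with kernel $K_\ell(z,w)=(1-\langle z,w\rangle)^{-\ell}1_{\mathcal E}$). $M_z=(M_{z_1},\dots,M_{z_n})$ is the tuple of multiplication operators by the coordinate functions; it is also regarded as the row operator $M_z:H_m(\mathbb B,\mathcal D)^n\to H_m(\mathbb B,\mathcal D)$, $(f_i)\mapsto\sum_i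 z_if_i$, with adjoint the column operator $M_z^*f=(M_{z_i}^*f)_{i=1}^n$. The row operator $M_z$ has closed range $\{f: f(0)=0\}$, so $M_z^*M_z=(M_{z_i}^*M_{z_j})_{i,j}$ restricts to an invertible operator on the closed subspace $\operatorname{Im}M_z^*\subset H_m(\mathbb B,\mathcal D)^n$; $(M_z^*M_z)^{-1}$ denotes the inverse of this restriction. The operator $\delta:H_m(\mathbb B,\mathcal D)\to H_m(\mathbb B,\mathcal D)$ is defined by \[ \delta\Big(\sum_{k=0}^\infty\sum_{|\alpha|=k}f_\alpha z^\alpha\Big)=f_0+\sum_{k=1}^\infty\frac{m+k-1}{k}\sum_{|\alpha|=k}f_\alpha z^\alpha . \] *)

theory Defs
  imports "HOL-Analysis.Analysis"
begin

text \<open>Multi-indices alpha in N^n are functions 'n => nat for a finite type 'n, n = CARD('n).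
  An element f = sum_alpha f_alpha z^alpha of H_l(B,D) is represented by its coefficient
  family alpha |-> f_alpha in D.\<close>

definition mabs :: "('n::finite \<Rightarrow> nat) \<Rightarrow> nat" where
  "mabs \<alpha> = (\<Sum>i\<in>UNIV. \<alpha> i)"

definition mfact :: "('n::finite \<Rightarrow> nat) \<Rightarrow> real" where
  "mfact \<alpha> = (\<Prod>i\<in>UNIV. fact (\<alpha> i))"

definition rho :: "nat \<Rightarrow> ('n::finite \<Rightarrow> nat) \<Rightarrow> real" where
  "rho l \<alpha> = fact (l + mabs \<alpha> - 1) / (mfact \<alpha> * fact (l - 1))"

text \<open>A complex Hilbert space D is a real Hilbert space with an orthogonal complex structure J
  (multiplication by i).  Complex scalar multiplication and complex inner product:\<close>

definition complex_structure :: "('d::real_inner \<Rightarrow> 'd) \<Rightarrow> bool" where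
  "complex_structure J \<longleftrightarrow> linear J \<and> (\<forall>x. J (J x) = - x) \<and> (\<forall>x y. J x \<bullet> J y = x \<bullet> y)"

definition cscale :: "('d::real_inner \<Rightarrow> 'd) \<Rightarrow> complex \<Rightarrow> 'd \<Rightarrow> 'd" where
  "cscale J c x = Re c *\<^sub>R x + Im c *\<^sub>R J x"

definition cinner :: "('d::real_inner \<Rightarrow> 'd) \<Rightarrow> 'd \<Rightarrow> 'd \<Rightarrow> complex" where
  "cinner J x y = Complex (x \<bullet> y) (x \<bullet> J y)"

definition Hspace :: "nat \<Rightarrow> (('n::finite \<Rightarrow> nat) \<Rightarrow> 'd::real_inner) set" where
  "Hspace l = {f. (\<lambda>\<alpha>. (norm (f \<alpha>))\<^sup>2 / rho l \<alpha>) summable_on UNIV}"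

definition hinner :: "nat \<Rightarrow> ('d::real_inner \<Rightarrow> 'd) \<Rightarrow> (('n::finite \<Rightarrow> nat) \<Rightarrow> 'd)
    \<Rightarrow> (('n \<Rightarrow> nat) \<Rightarrow> 'd) \<Rightarrow> complex" where
  "hinner l J f g = infsum (\<lambda>\<alpha>. cinner J (f \<alpha>) (g \<alpha>) / complex_of_real (rho l \<alpha>)) UNIV"

definition hnorm :: "nat \<Rightarrow> (('n::finite \<Rightarrow> nat) \<Rightarrow> 'd::real_inner) \<Rightarrow> real" where
  "hnorm l f = sqrt (infsum (\<lambda>\<alpha>. (norm (f \<alpha>))\<^sup>2 / rho l \<alpha>) UNIV)"

definition HspaceN :: "nat \<Rightarrow> ('n::finite \<Rightarrow> ('n \<Rightarrow> nat) \<Rightarrow> 'd::real_inner) set" where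
  "HspaceN l = {F. \<forall>i. F i \<in> Hspace l}"

definition hinnerN :: "nat \<Rightarrow> ('d::real_inner \<Rightarrow> 'd) \<Rightarrow> ('n::finite \<Rightarrow> ('n \<Rightarrow> nat) \<Rightarrow> 'd)
    \<Rightarrow> ('n \<Rightarrow> ('n \<Rightarrow> nat) \<Rightarrow> 'd) \<Rightarrow> complex" where
  "hinnerN l J F G = (\<Sum>i\<in>UNIV. hinner l J (F i) (G i))"

definition hnormN :: "nat \<Rightarrow> ('n::finite \<Rightarrow> ('n \<Rightarrow> nat) \<Rightarrow> 'd::real_inner) \<Rightarrow> real" where
  "hnormN l F = sqrt (\<Sum>i\<in>UNIV. (hnorm l (F i))\<^sup>2)"

definition Mzi :: "'n::finite \<Rightarrow> (('n \<Rightarrow> nat) \<Rightarrow> 'd::real_vector) \<Rightarrow> (('n \<Rightarrow> nat) \<Rightarrow> 'd)" where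
  "Mzi i f = (\<lambda>\<alpha>. if \<alpha> i = 0 then 0 else f (\<alpha>(i := \<alpha> i - 1)))"

definition Mz_row :: "('n::finite \<Rightarrow> ('n \<Rightarrow> nat) \<Rightarrow> 'd::real_vector) \<Rightarrow> (('n \<Rightarrow> nat) \<Rightarrow> 'd)" where
  "Mz_row F = (\<lambda>\<alpha>. \<Sum>i\<in>UNIV. Mzi i (F i) \<alpha>)"

definition Mz_star :: "nat \<Rightarrow> ('d::real_inner \<Rightarrow> 'd) \<Rightarrow> (('n::finite \<Rightarrow> nat) \<Rightarrow> 'd)
    \<Rightarrow> ('n \<Rightarrow> ('n \<Rightarrow> nat) \<Rightarrow> 'd)" where
  "Mz_star m J f = (THE G. G \<in> HspaceN m \<and>
      (\<forall>H\<in>HspaceN m. hinner m J (Mz_row H) f = hinnerN m J H G))"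

definition MzMz_inv :: "nat \<Rightarrow> ('d::real_inner \<Rightarrow> 'd) \<Rightarrow> ('n::finite \<Rightarrow> ('n \<Rightarrow> nat) \<Rightarrow> 'd)
    \<Rightarrow> ('n \<Rightarrow> ('n \<Rightarrow> nat) \<Rightarrow> 'd)" where
  "MzMz_inv m J G = (THE X. X \<in> Mz_star m J ` Hspace m \<and> Mz_star m J (Mz_row X) = G)"

definition delta :: "nat \<Rightarrow> (('n::finite \<Rightarrow> nat) \<Rightarrow> 'd::real_vector) \<Rightarrow> (('n \<Rightarrow> nat) \<Rightarrow> 'd)" where
  "delta m f = (\<lambda>\<alpha>. if mabs \<alpha> = 0 then f \<alpha>
      else (real (m + mabs \<alpha> - 1) / real (mabs \<alpha>)) *\<^sub>R f \<alpha>)"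

end

theory Submission
  imports Defs
begin

text \<open>Everything is diagonal in the monomial basis. Since
  \<open>\<rho>(\<beta> + e_i) / \<rho>(\<beta>) = (m + |\<beta>|) / (\<beta>_i + 1)\<close>, the adjoint of the row operator is
  \<open>(M_z^* f)_i(\<beta>) = (\<beta>_i + 1) / (m + |\<beta>|) \<cdot> f(\<beta> + e_i)\<close>. It ignores the constant
  coefficient, and \<open>M_z M_z^*\<close> multiplies the coefficient of \<open>z^\<alpha>\<close> by \<open>|\<alpha>| / (m + |\<alpha>| - 1)\<close>,
  which for \<open>\<alpha> \<noteq> 0\<close> is exactly the reciprocal of the factor in \<open>\<delta>\<close>. Hence
  \<open>M_z^* M_z (M_z^* \<delta> f) = M_z^* f\<close>, and \<open>M_z^* \<delta> f\<close> is the only preimage in \<open>Im M_z^*\<close>.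
  Boundedness of \<open>\<delta> M_z\<close> follows from \<open>\<parallel>M_{z_i}\<parallel> \<le> 1\<close> and from the factors of \<open>\<delta>\<close>
  being at most \<open>m\<close>.\<close>

section \<open>Multi-indices and the weights \<open>\<rho>\<close>\<close>

definition incr_at :: "'n \<Rightarrow> ('n \<Rightarrow> nat) \<Rightarrow> ('n \<Rightarrow> nat)" where
  "incr_at i \<beta> = \<beta>(i := Suc (\<beta> i))"

lemma incr_at_same [simp]: "incr_at i \<beta> i = Suc (\<beta> i)"
  unfolding incr_at_def by simp

lemma mabs_incr_at: "mabs (incr_at i (\<beta>::'n::finite \<Rightarrow> nat)) = Suc (mabs \<beta>)"
proof -
  have "mabs (incr_at i \<beta>) = (\<Sum>j\<in>UNIV. \<beta> j + (if j = i then 1 else 0))"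
    unfolding mabs_def incr_at_def by (intro sum.cong) auto
  then show ?thesis by (simp add: sum.distrib mabs_def)
qed

lemma mfact_incr_at: "mfact (incr_at i (\<beta>::'n::finite \<Rightarrow> nat)) = mfact \<beta> * real (Suc (\<beta> i))"
proof -
  have "mfact (incr_at i \<beta>) = (\<Prod>j\<in>UNIV. fact (\<beta> j) * (if j = i then real (Suc (\<beta> i)) else 1))"
    unfolding mfact_def incr_at_def by (intro prod.cong) auto
  then show ?thesis by (simp add: prod.distrib mfact_def)
qed

lemma le_mabs: "\<beta> i \<le> mabs (\<beta>::'n::finite \<Rightarrow> nat)"
  unfolding mabs_def by (rule member_le_sum) auto

lemma bij_betw_incr_at: "bij_betw (incr_at i) UNIV {\<alpha>. \<alpha> i \<noteq> 0}"
  by (rule bij_betw_byWitness[where f' = "\<lambda>\<alpha>. \<alpha>(i := \<alpha> i - 1)"]) (auto simp: incr_at_def)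

lemma rho_pos: "rho l \<alpha> > 0"
  unfolding rho_def mfact_def by (simp add: prod_pos)

definition adjoint_coeff :: "nat \<Rightarrow> 'n \<Rightarrow> ('n::finite \<Rightarrow> nat) \<Rightarrow> real" where
  "adjoint_coeff m i \<beta> = real (Suc (\<beta> i)) / real (m + mabs \<beta>)"

lemma adjoint_coeff_pos: "m \<ge> 1 \<Longrightarrow> adjoint_coeff m i \<beta> > 0"
  unfolding adjoint_coeff_def by simp

lemma adjoint_coeff_le_1: "m \<ge> 1 \<Longrightarrow> adjoint_coeff m i \<beta> \<le> 1"
  unfolding adjoint_coeff_def using le_mabs[of \<beta> i] by simp

lemma rho_incr_at:
  assumes "m \<ge> 1"
  shows "rho m (incr_at i \<beta>) = rho m \<beta> / adjoint_coeff m i \<beta>"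
proof -
  have "fact (m + mabs (incr_at i \<beta>) - 1) = (fact (m + mabs \<beta>) :: real)"
    by (simp add: mabs_incr_at)
  also have "\<dots> = real (m + mabs \<beta>) * fact (m + mabs \<beta> - 1)"
    using assms by (simp add: fact_reduce)
  finally show ?thesis
    unfolding rho_def mfact_incr_at adjoint_coeff_def by (simp add: mult_ac)
qed

section \<open>Norm estimates in \<open>H_m\<close>\<close>

lemma summable_on_incr_at_iff:
  fixes g :: "('n \<Rightarrow> nat) \<Rightarrow> 'a::{comm_monoid_add,t2_space}"
  assumes "\<And>\<alpha>. \<alpha> i = 0 \<Longrightarrow> g \<alpha> = 0"
  shows "g summable_on UNIV \<longleftrightarrow> (\<lambda>\<beta>. g (incr_at i \<beta>)) summable_on UNIV"
proof -
  have "g summable_on UNIV \<longleftrightarrow> g summable_on {\<alpha>. \<alpha> i \<noteq> 0}"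
    by (rule summable_on_cong_neutral) (use assms in auto)
  also have "\<dots> \<longleftrightarrow> (\<lambda>\<beta>. g (incr_at i \<beta>)) summable_on UNIV"
    by (rule summable_on_reindex_bij_betw[OF bij_betw_incr_at, symmetric])
  finally show ?thesis .
qed

lemma infsum_incr_at:
  fixes g :: "('n \<Rightarrow> nat) \<Rightarrow> 'a::{comm_monoid_add,t2_space}"
  assumes "\<And>\<alpha>. \<alpha> i = 0 \<Longrightarrow> g \<alpha> = 0"
  shows "infsum g UNIV = infsum (\<lambda>\<beta>. g (incr_at i \<beta>)) UNIV"
proof -
  have "infsum g UNIV = infsum g {\<alpha>. \<alpha> i \<noteq> 0}"
    by (rule infsum_cong_neutral) (use assms in auto)
  also have "\<dots> = infsum (\<lambda>\<beta>. g (incr_at i \<beta>)) UNIV"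
    by (rule infsum_reindex_bij_betw[OF bij_betw_incr_at, symmetric])
  finally show ?thesis .
qed

lemma summable_on_finite_sum:
  fixes f :: "'i \<Rightarrow> 'a \<Rightarrow> 'b::topological_comm_monoid_add"
  assumes "finite I" "\<And>i. i \<in> I \<Longrightarrow> f i summable_on A"
  shows "(\<lambda>x. \<Sum>i\<in>I. f i x) summable_on A"
  using assms by (induction I rule: finite_induct) (auto intro!: summable_on_add)

lemma infsum_finite_sum:
  fixes f :: "'i \<Rightarrow> 'a \<Rightarrow> 'b::{topological_comm_monoid_add,t2_space}"
  assumes "finite I" "\<And>i. i \<in> I \<Longrightarrow> f i summable_on A"
  shows "infsum (\<lambda>x. \<Sum>i\<in>I. f i x) A = (\<Sum>i\<in>I. infsum (f i) A)"
  using assms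
proof (induction I rule: finite_induct)
  case (insert j I)
  then have "infsum (\<lambda>x. f j x + (\<Sum>i\<in>I. f i x)) A = infsum (f j) A + infsum (\<lambda>x. \<Sum>i\<in>I. f i x) A"
    by (intro infsum_add) (auto intro!: summable_on_finite_sum)
  with insert show ?case by simp
qed simp

lemma weighted_sq_nonneg [simp]: "0 \<le> (norm x)\<^sup>2 / rho l \<alpha>"
  using rho_pos[of l \<alpha>] by simp

lemma hnorm_sq: "(hnorm l f)\<^sup>2 = infsum (\<lambda>\<alpha>. (norm (f \<alpha>))\<^sup>2 / rho l \<alpha>) UNIV"
  unfolding hnorm_def by (simp add: infsum_nonneg)

lemma hnorm_nonneg: "hnorm l f \<ge> 0"
  unfolding hnorm_def by (simp add: infsum_nonneg)

lemma hnormN_nonneg: "hnormN l F \<ge> 0"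
  unfolding hnormN_def by (simp add: sum_nonneg)

lemma hnormN_sq: "(hnormN l F)\<^sup>2 = (\<Sum>i\<in>UNIV. (hnorm l (F i))\<^sup>2)"
  unfolding hnormN_def by (simp add: sum_nonneg)

lemma Hspace_dominated:
  assumes "h summable_on UNIV" "\<And>\<alpha>. (norm (g \<alpha>))\<^sup>2 / rho l \<alpha> \<le> h \<alpha>"
  shows "g \<in> Hspace l" "(hnorm l g)\<^sup>2 \<le> infsum h UNIV"
proof -
  have "(\<lambda>\<alpha>. (norm (g \<alpha>))\<^sup>2 / rho l \<alpha>) summable_on UNIV"
    by (rule summable_on_comparison_test[OF assms(1)]) (simp_all add: assms(2))
  then show "g \<in> Hspace l" "(hnorm l g)\<^sup>2 \<le> infsum h UNIV"
    unfolding Hspace_def hnorm_sq by (auto intro!: infsum_mono assms)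
qed

lemma Mzi_incr_at: "Mzi i h (incr_at i \<beta>) = h \<beta>"
  unfolding Mzi_def incr_at_def by simp

lemma Mzi_eq_0: "\<alpha> i = 0 \<Longrightarrow> Mzi i h \<alpha> = 0"
  unfolding Mzi_def by simp

lemma Mzi_Hspace:
  assumes m: "m \<ge> 1" and h: "h \<in> Hspace m"
  shows "Mzi i h \<in> Hspace m" "hnorm m (Mzi i h) \<le> hnorm m h"
proof -
  let ?g = "\<lambda>\<alpha>. (norm (Mzi i h \<alpha>))\<^sup>2 / rho m \<alpha>"
  let ?h = "\<lambda>\<beta>. (norm (h \<beta>))\<^sup>2 / rho m \<beta>"
  have g0: "\<And>\<alpha>. \<alpha> i = 0 \<Longrightarrow> ?g \<alpha> = 0" by (simp add: Mzi_eq_0)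
  have hs: "?h summable_on UNIV" using h unfolding Hspace_def by simp
  have le: "?g (incr_at i \<beta>) \<le> ?h \<beta>" for \<beta>
  proof -
    have "?g (incr_at i \<beta>) = adjoint_coeff m i \<beta> * ?h \<beta>"
      by (simp add: Mzi_incr_at rho_incr_at[OF m])
    also have "\<dots> \<le> ?h \<beta>"
      by (intro mult_left_le_one_le weighted_sq_nonneg less_imp_le[OF adjoint_coeff_pos[OF m]]
          adjoint_coeff_le_1[OF m])
    finally show ?thesis .
  qed
  have gs: "(\<lambda>\<beta>. ?g (incr_at i \<beta>)) summable_on UNIV"
    by (rule summable_on_comparison_test[OF hs le]) simp
  then show "Mzi i h \<in> Hspace m"
    unfolding Hspace_def using summable_on_incr_at_iff[where g = ?g, OF g0] by simp
  have "(hnorm m (Mzi i h))\<^sup>2 = infsum (\<lambda>\<beta>. ?g (incr_at i \<beta>)) UNIV"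
    unfolding hnorm_sq by (rule infsum_incr_at[OF g0])
  also have "\<dots> \<le> (hnorm m h)\<^sup>2"
    unfolding hnorm_sq by (rule infsum_mono[OF gs hs le])
  finally have "(hnorm m (Mzi i h))\<^sup>2 \<le> (hnorm m h)\<^sup>2" .
  then show "hnorm m (Mzi i h) \<le> hnorm m h"
    by (rule power2_le_imp_le) (rule hnorm_nonneg)
qed

lemma Mz_row_Hspace:
  fixes F :: "'n::finite \<Rightarrow> ('n \<Rightarrow> nat) \<Rightarrow> 'd::real_inner"
  assumes m: "m \<ge> 1" and F: "F \<in> HspaceN m"
  shows "Mz_row F \<in> Hspace m" "hnorm m (Mz_row F) \<le> sqrt (real CARD('n)) * hnormN m F"
proof -
  let ?g = "\<lambda>i \<alpha>. (norm (Mzi i (F i) \<alpha>))\<^sup>2 / rho m \<alpha>"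
  have Fi: "F i \<in> Hspace m" for i using F unfolding HspaceN_def by auto
  have gs: "?g i summable_on UNIV" for i using Mzi_Hspace(1)[OF m Fi] unfolding Hspace_def by simp
  have pointwise: "(norm (Mz_row F \<alpha>))\<^sup>2 / rho m \<alpha> \<le> real CARD('n) * (\<Sum>i\<in>UNIV. ?g i \<alpha>)" for \<alpha>
  proof -
    have "(norm (Mz_row F \<alpha>))\<^sup>2 \<le> (\<Sum>i\<in>UNIV. norm (Mzi i (F i) \<alpha>))\<^sup>2"
      unfolding Mz_row_def by (intro power_mono norm_sum) auto
    also have "\<dots> \<le> (\<Sum>i\<in>UNIV. (norm (Mzi i (F i) \<alpha>))\<^sup>2) * real CARD('n)"
      by (rule sum_squared_le_sum_of_squares)
    finally show ?thesis
      using rho_pos[of m \<alpha>] by (simp add: sum_divide_distrib[symmetric] divide_right_mono mult.commute)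
  qed
  have S: "(\<lambda>\<alpha>. real CARD('n) * (\<Sum>i\<in>UNIV. ?g i \<alpha>)) summable_on UNIV"
    by (intro summable_on_cmult_right summable_on_finite_sum gs) auto
  show "Mz_row F \<in> Hspace m" by (rule Hspace_dominated(1)[OF S pointwise])
  have "(hnorm m (Mz_row F))\<^sup>2 \<le> real CARD('n) * (\<Sum>i\<in>UNIV. (hnorm m (Mzi i (F i)))\<^sup>2)"
    using Hspace_dominated(2)[OF S pointwise]
    by (simp add: infsum_cmult_right' infsum_finite_sum[OF _ gs] hnorm_sq)
  also have "\<dots> \<le> real CARD('n) * (hnormN m F)\<^sup>2"
    unfolding hnormN_sq
    by (intro mult_left_mono sum_mono power_mono Mzi_Hspace(2)[OF m Fi] hnorm_nonneg) auto
  also have "\<dots> = (sqrt (real CARD('n)) * hnormN m F)\<^sup>2"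
    by (simp add: power_mult_distrib)
  finally show "hnorm m (Mz_row F) \<le> sqrt (real CARD('n)) * hnormN m F"
    by (rule power2_le_imp_le) (simp add: hnormN_nonneg)
qed

lemma delta_coeff_le:
  assumes "m \<ge> 1"
  shows "real (m + k - 1) / real k \<le> real m"
proof (cases k)
  case (Suc n)
  have "real n \<le> real n * real m" using assms by (simp add: mult_le_cancel_left1)
  then show ?thesis using Suc by (simp add: field_simps)
qed simp

lemma norm_delta_le:
  assumes "m \<ge> 1"
  shows "norm (delta m f \<alpha>) \<le> real m * norm (f \<alpha>)"
proof (cases "mabs \<alpha> = 0")
  case True
  then show ?thesis using assms by (simp add: delta_def mult_le_cancel_right1)
next
  case False
  then have "norm (delta m f \<alpha>) = real (m + mabs \<alpha> - 1) / real (mabs \<alpha>) * norm (f \<alpha>)"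
    by (simp add: delta_def)
  also have "\<dots> \<le> real m * norm (f \<alpha>)"
    by (rule mult_right_mono[OF delta_coeff_le[OF assms]]) simp
  finally show ?thesis .
qed

lemma delta_Hspace:
  assumes m: "m \<ge> 1" and f: "f \<in> Hspace m"
  shows "delta m f \<in> Hspace m" "hnorm m (delta m f) \<le> real m * hnorm m f"
proof -
  let ?h = "\<lambda>\<alpha>. (real m)\<^sup>2 * ((norm (f \<alpha>))\<^sup>2 / rho m \<alpha>)"
  have S: "?h summable_on UNIV"
    using f unfolding Hspace_def by (intro summable_on_cmult_right) simp
  have pointwise: "(norm (delta m f \<alpha>))\<^sup>2 / rho m \<alpha> \<le> ?h \<alpha>" for \<alpha>
  proof -
    have "(norm (delta m f \<alpha>))\<^sup>2 \<le> (real m * norm (f \<alpha>))\<^sup>2"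
      by (intro power_mono norm_delta_le[OF m]) auto
    then show ?thesis
      using rho_pos[of m \<alpha>] by (simp add: power_mult_distrib divide_right_mono)
  qed
  show "delta m f \<in> Hspace m" by (rule Hspace_dominated(1)[OF S pointwise])
  have "(hnorm m (delta m f))\<^sup>2 \<le> (real m * hnorm m f)\<^sup>2"
    using Hspace_dominated(2)[OF S pointwise]
    unfolding infsum_cmult_right' by (simp add: power_mult_distrib hnorm_sq)
  then show "hnorm m (delta m f) \<le> real m * hnorm m f"
    by (rule power2_le_imp_le) (simp add: hnorm_nonneg)
qed

section \<open>The adjoint of \<open>M_z\<close>\<close>

lemma complex_structure_linear: "complex_structure J \<Longrightarrow> linear J"
  unfolding complex_structure_def by simp

lemma complex_structure_norm: "complex_structure J \<Longrightarrow> norm (J y) = norm y"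
  unfolding complex_structure_def norm_eq_sqrt_inner by simp

lemma cinner_sum_left: "cinner J (\<Sum>i\<in>I. x i) y = (\<Sum>i\<in>I. cinner J (x i) y)"
  unfolding cinner_def by (simp add: complex_eq_iff inner_sum_left Re_sum Im_sum)

lemma cinner_zero_left [simp]: "cinner J 0 y = 0"
  unfolding cinner_def by (simp add: complex_eq_iff)

lemma cinner_scaleR_right:
  assumes "complex_structure J"
  shows "cinner J x (c *\<^sub>R y) = complex_of_real c * cinner J x y"
  using linear_scale[OF complex_structure_linear[OF assms]] unfolding cinner_def by (simp add: complex_eq_iff)

lemma norm_cinner_le:
  assumes "complex_structure J"
  shows "norm (cinner J x y) \<le> (norm x)\<^sup>2 + (norm y)\<^sup>2"
proof -
  have "norm (cinner J x y) \<le> \<bar>x \<bullet> y\<bar> + \<bar>x \<bullet> J y\<bar>"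
    using cmod_le[of "cinner J x y"] unfolding cinner_def by simp
  also have "\<dots> \<le> norm x * norm y + norm x * norm (J y)"
    by (intro add_mono Cauchy_Schwarz_ineq2)
  also have "\<dots> = 2 * (norm x * norm y)"
    using complex_structure_norm[OF assms] by simp
  also have "\<dots> \<le> (norm x)\<^sup>2 + (norm y)\<^sup>2"
    using sum_squares_bound[of "norm x" "norm y"] by simp
  finally show ?thesis .
qed

lemma hinner_summable:
  assumes J: "complex_structure J" and f: "f \<in> Hspace m" and g: "g \<in> Hspace m"
  shows "(\<lambda>\<alpha>. cinner J (f \<alpha>) (g \<alpha>) / complex_of_real (rho m \<alpha>)) summable_on UNIV"
proof (rule abs_summable_summable)
  have fs: "(\<lambda>\<alpha>. (norm (f \<alpha>))\<^sup>2 / rho m \<alpha>) summable_on UNIV"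
    using f unfolding Hspace_def by simp
  have gs: "(\<lambda>\<alpha>. (norm (g \<alpha>))\<^sup>2 / rho m \<alpha>) summable_on UNIV"
    using g unfolding Hspace_def by simp
  show "(\<lambda>\<alpha>. norm (cinner J (f \<alpha>) (g \<alpha>) / complex_of_real (rho m \<alpha>))) summable_on UNIV"
  proof (rule Infinite_Sum.abs_summable_on_comparison_test'[OF summable_on_add[OF fs gs]])
    fix \<alpha>
    have "norm (cinner J (f \<alpha>) (g \<alpha>) / complex_of_real (rho m \<alpha>)) = norm (cinner J (f \<alpha>) (g \<alpha>)) / rho m \<alpha>"
      using rho_pos[of m \<alpha>] by (simp add: norm_divide)
    also have "\<dots> \<le> ((norm (f \<alpha>))\<^sup>2 + (norm (g \<alpha>))\<^sup>2) / rho m \<alpha>"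
      using rho_pos[of m \<alpha>] by (intro divide_right_mono norm_cinner_le[OF J]) simp
    finally show "norm (cinner J (f \<alpha>) (g \<alpha>) / complex_of_real (rho m \<alpha>))
        \<le> (norm (f \<alpha>))\<^sup>2 / rho m \<alpha> + (norm (g \<alpha>))\<^sup>2 / rho m \<alpha>"
      by (simp add: add_divide_distrib)
  qed
qed

definition Mz_adjoint :: "nat \<Rightarrow> (('n::finite \<Rightarrow> nat) \<Rightarrow> 'd::real_vector) \<Rightarrow> 'n \<Rightarrow> ('n \<Rightarrow> nat) \<Rightarrow> 'd" where
  "Mz_adjoint m f = (\<lambda>i \<beta>. adjoint_coeff m i \<beta> *\<^sub>R f (incr_at i \<beta>))"

lemma Mz_adjoint_HspaceN:
  assumes m: "m \<ge> 1" and f: "f \<in> Hspace m"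
  shows "Mz_adjoint m f \<in> HspaceN m"
  unfolding HspaceN_def
proof (intro CollectI allI)
  fix i
  let ?h = "\<lambda>\<alpha>. (norm (f \<alpha>))\<^sup>2 / rho m \<alpha>"
  have "?h summable_on {\<alpha>. \<alpha> i \<noteq> 0}"
    using f unfolding Hspace_def by (auto intro: summable_on_subset_banach)
  then have hs: "(\<lambda>\<beta>. ?h (incr_at i \<beta>)) summable_on UNIV"
    by (rule summable_on_reindex_bij_betw[OF bij_betw_incr_at, THEN iffD2])
  have le: "(norm (Mz_adjoint m f i \<beta>))\<^sup>2 / rho m \<beta> \<le> ?h (incr_at i \<beta>)" for \<beta>
  proof -
    have c: "0 < adjoint_coeff m i \<beta>" "adjoint_coeff m i \<beta> \<le> 1"
      using adjoint_coeff_pos[OF m] adjoint_coeff_le_1[OF m] by auto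
    have "(norm (Mz_adjoint m f i \<beta>))\<^sup>2 / rho m \<beta> = adjoint_coeff m i \<beta> * ?h (incr_at i \<beta>)"
      using c by (simp add: Mz_adjoint_def rho_incr_at[OF m] power2_eq_square)
    also have "\<dots> \<le> ?h (incr_at i \<beta>)"
      using c by (intro mult_left_le_one_le weighted_sq_nonneg) auto
    finally show ?thesis .
  qed
  show "Mz_adjoint m f i \<in> Hspace m"
    by (rule Hspace_dominated(1)[OF hs le])
qed

lemma hinner_Mz_row_Mz_adjoint:
  assumes m: "m \<ge> 1" and J: "complex_structure J" and H: "H \<in> HspaceN m" and f: "f \<in> Hspace m"
  shows "hinner m J (Mz_row H) f = hinnerN m J H (Mz_adjoint m f)"
proof -
  have Hi: "H i \<in> Hspace m" for i using H unfolding HspaceN_def by auto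
  let ?t = "\<lambda>i \<alpha>. cinner J (Mzi i (H i) \<alpha>) (f \<alpha>) / complex_of_real (rho m \<alpha>)"
  have ts: "?t i summable_on UNIV" for i
    by (rule hinner_summable[OF J Mzi_Hspace(1)[OF m Hi] f])
  have coeff: "?t i (incr_at i \<beta>) = cinner J (H i \<beta>) (Mz_adjoint m f i \<beta>) / complex_of_real (rho m \<beta>)"
    for i \<beta>
    using adjoint_coeff_pos[OF m, of i \<beta>] rho_pos[of m \<beta>]
    by (simp add: Mzi_incr_at Mz_adjoint_def cinner_scaleR_right[OF J] rho_incr_at[OF m])
  have "hinner m J (Mz_row H) f = infsum (\<lambda>\<alpha>. \<Sum>i\<in>UNIV. ?t i \<alpha>) UNIV"
    unfolding hinner_def Mz_row_def cinner_sum_left by (simp add: sum_divide_distrib)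
  also have "\<dots> = (\<Sum>i\<in>UNIV. infsum (?t i) UNIV)"
    using ts by (intro infsum_finite_sum) auto
  also have "\<dots> = (\<Sum>i\<in>UNIV. infsum (\<lambda>\<beta>. ?t i (incr_at i \<beta>)) UNIV)"
    by (intro sum.cong refl infsum_incr_at) (simp add: Mzi_eq_0)
  also have "\<dots> = hinnerN m J H (Mz_adjoint m f)"
    unfolding hinnerN_def hinner_def coeff ..
  finally show ?thesis .
qed

lemma single_coeff_HspaceN: "(\<lambda>j \<gamma>. if j = i \<and> \<gamma> = \<beta> then x else 0) \<in> HspaceN m"
  unfolding HspaceN_def Hspace_def
proof (intro CollectI allI)
  fix j
  show "(\<lambda>\<alpha>. (norm (if j = i \<and> \<alpha> = \<beta> then x else 0))\<^sup>2 / rho m \<alpha>) summable_on UNIV"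
    by (rule summable_on_cong_neutral[where T = "{\<beta>}", THEN iffD2]) auto
qed

lemma hinnerN_single_coeff:
  "hinnerN m J (\<lambda>j \<gamma>. if j = i \<and> \<gamma> = \<beta> then x else 0) G
     = cinner J x (G i \<beta>) / complex_of_real (rho m \<beta>)"
proof -
  have "hinner m J (\<lambda>\<gamma>. if j = i \<and> \<gamma> = \<beta> then x else 0) (G j)
      = (if j = i then cinner J x (G i \<beta>) / complex_of_real (rho m \<beta>) else 0)" for j
  proof -
    have "hinner m J (\<lambda>\<gamma>. if j = i \<and> \<gamma> = \<beta> then x else 0) (G j)
        = infsum (\<lambda>\<gamma>. cinner J (if j = i \<and> \<gamma> = \<beta> then x else 0) (G j \<gamma>) / complex_of_real (rho m \<gamma>)) {\<beta>}"
      unfolding hinner_def by (rule infsum_cong_neutral) auto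
    then show ?thesis by auto
  qed
  then show ?thesis unfolding hinnerN_def by simp
qed

text \<open>Testing against single coefficients shows that the Riesz characterisation of \<open>M_z^*\<close>
  determines it uniquely, so the explicit formula is the adjoint.\<close>
lemma Mz_star_eq_Mz_adjoint:
  assumes m: "m \<ge> 1" and J: "complex_structure J" and f: "f \<in> Hspace m"
  shows "Mz_star m J f = Mz_adjoint m f"
  unfolding Mz_star_def
proof (rule the_equality)
  show "Mz_adjoint m f \<in> HspaceN m \<and>
      (\<forall>H\<in>HspaceN m. hinner m J (Mz_row H) f = hinnerN m J H (Mz_adjoint m f))"
    using Mz_adjoint_HspaceN[OF m f] hinner_Mz_row_Mz_adjoint[OF m J _ f] by auto
  fix G assume G: "G \<in> HspaceN m \<and> (\<forall>H\<in>HspaceN m. hinner m J (Mz_row H) f = hinnerN m J H G)"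
  show "G = Mz_adjoint m f"
  proof (intro ext)
    fix i \<beta>
    define x where "x = G i \<beta> - Mz_adjoint m f i \<beta>"
    let ?H = "\<lambda>j \<gamma>. if j = i \<and> \<gamma> = \<beta> then x else 0"
    have "hinnerN m J ?H G = hinnerN m J ?H (Mz_adjoint m f)"
      using G hinner_Mz_row_Mz_adjoint[OF m J single_coeff_HspaceN f] single_coeff_HspaceN by metis
    then have "cinner J x (G i \<beta>) = cinner J x (Mz_adjoint m f i \<beta>)"
      unfolding hinnerN_single_coeff using rho_pos[of m \<beta>] by simp
    then have "x \<bullet> x = 0"
      unfolding x_def cinner_def by (simp add: inner_diff_right)
    then show "G i \<beta> = Mz_adjoint m f i \<beta>" unfolding x_def by simp
  qed
qed

section \<open>The inverse of \<open>M_z^* M_z\<close> on \<open>Im M_z^*\<close>\<close>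

definition nonconst_part :: "(('n::finite \<Rightarrow> nat) \<Rightarrow> 'd::zero) \<Rightarrow> ('n \<Rightarrow> nat) \<Rightarrow> 'd" where
  "nonconst_part f = (\<lambda>\<alpha>. if mabs \<alpha> = 0 then 0 else f \<alpha>)"

lemma mabs_eq_0_iff: "mabs (\<alpha>::'n::finite \<Rightarrow> nat) = 0 \<longleftrightarrow> (\<forall>i. \<alpha> i = 0)"
  unfolding mabs_def by simp

lemma incr_at_decr: "\<alpha> i \<noteq> 0 \<Longrightarrow> incr_at i (\<alpha>(i := \<alpha> i - 1)) = \<alpha>"
  unfolding incr_at_def by auto

lemma nonconst_part_idem [simp]: "nonconst_part (nonconst_part f) = nonconst_part f"
  unfolding nonconst_part_def by (rule ext) simp

lemma nonconst_part_Mz_row: "nonconst_part (Mz_row F) = Mz_row F"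
proof
  fix \<alpha>
  show "nonconst_part (Mz_row F) \<alpha> = Mz_row F \<alpha>"
  proof (cases "mabs \<alpha> = 0")
    case True
    then show ?thesis by (simp add: nonconst_part_def Mz_row_def Mzi_eq_0 mabs_eq_0_iff)
  qed (simp add: nonconst_part_def)
qed

lemma delta_nonconst_part: "delta m (nonconst_part f) = nonconst_part (delta m f)"
  unfolding delta_def nonconst_part_def by (rule ext) simp

lemma Mz_adjoint_eq_iff:
  assumes m: "m \<ge> 1"
  shows "Mz_adjoint m f = Mz_adjoint m g \<longleftrightarrow> nonconst_part f = nonconst_part g"
proof
  assume fg: "Mz_adjoint m f = Mz_adjoint m g"
  show "nonconst_part f = nonconst_part g"
  proof
    fix \<alpha>
    show "nonconst_part f \<alpha> = nonconst_part g \<alpha>"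
    proof (cases "mabs \<alpha> = 0")
      case False
      then obtain i where i: "\<alpha> i \<noteq> 0" by (auto simp: mabs_eq_0_iff)
      define \<beta> where "\<beta> = \<alpha>(i := \<alpha> i - 1)"
      have "adjoint_coeff m i \<beta> *\<^sub>R f (incr_at i \<beta>) = adjoint_coeff m i \<beta> *\<^sub>R g (incr_at i \<beta>)"
        using fun_cong[OF fun_cong[OF fg, of i], of \<beta>] by (simp add: Mz_adjoint_def)
      then have "f \<alpha> = g \<alpha>"
        using adjoint_coeff_pos[OF m, of i \<beta>] incr_at_decr[of \<alpha> i, OF i] unfolding \<beta>_def by simp
      then show ?thesis by (simp add: nonconst_part_def)
    qed (simp add: nonconst_part_def)
  qed
next
  assume fg: "nonconst_part f = nonconst_part g"
  have "f (incr_at i \<beta>) = g (incr_at i \<beta>)" for i \<beta>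
    using fun_cong[OF fg, of "incr_at i \<beta>"] by (simp add: nonconst_part_def mabs_incr_at)
  then show "Mz_adjoint m f = Mz_adjoint m g" by (simp add: Mz_adjoint_def)
qed

lemma Mzi_Mz_adjoint:
  assumes m: "m \<ge> 1"
  shows "Mzi i (Mz_adjoint m g i) \<alpha> = (real (\<alpha> i) / real (m + mabs \<alpha> - 1)) *\<^sub>R g \<alpha>"
proof (cases "\<alpha> i = 0")
  case False
  define \<beta> where "\<beta> = \<alpha>(i := \<alpha> i - 1)"
  have \<alpha>: "\<alpha> = incr_at i \<beta>" unfolding \<beta>_def using incr_at_decr[of \<alpha> i, OF False] by simp
  show ?thesis
    unfolding \<alpha> Mzi_incr_at by (simp add: Mz_adjoint_def adjoint_coeff_def mabs_incr_at)
qed (simp add: Mzi_eq_0)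

lemma Mz_row_Mz_adjoint:
  assumes m: "m \<ge> 1"
  shows "Mz_row (Mz_adjoint m g) \<alpha> = (real (mabs \<alpha>) / real (m + mabs \<alpha> - 1)) *\<^sub>R g \<alpha>"
  unfolding Mz_row_def Mzi_Mz_adjoint[OF m] scaleR_sum_left[symmetric] sum_divide_distrib[symmetric]
  by (simp add: mabs_def)

lemma delta_Mz_row_Mz_adjoint:
  assumes m: "m \<ge> 1"
  shows "delta m (Mz_row (Mz_adjoint m g)) = nonconst_part g"
proof
  fix \<alpha>
  show "delta m (Mz_row (Mz_adjoint m g)) \<alpha> = nonconst_part g \<alpha>"
    using m by (cases "mabs \<alpha> = 0") (simp_all add: Mz_row_Mz_adjoint[OF m] nonconst_part_def delta_def)
qed

lemma Mz_row_Mz_adjoint_delta: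
  assumes m: "m \<ge> 1"
  shows "Mz_row (Mz_adjoint m (delta m g)) = nonconst_part g"
proof
  fix \<alpha>
  show "Mz_row (Mz_adjoint m (delta m g)) \<alpha> = nonconst_part g \<alpha>"
    using m by (cases "mabs \<alpha> = 0") (simp_all add: Mz_row_Mz_adjoint[OF m] nonconst_part_def delta_def)
qed

lemma MzMz_inv_Mz_adjoint:
  assumes m: "m \<ge> 1" and J: "complex_structure J" and f: "f \<in> Hspace m"
  shows "MzMz_inv m J (Mz_adjoint m f) = Mz_adjoint m (delta m f)"
  unfolding MzMz_inv_def
proof (rule the_equality)
  have df: "delta m f \<in> Hspace m" by (rule delta_Hspace(1)[OF m f])
  then have in_image: "Mz_adjoint m (delta m f) \<in> Mz_star m J ` Hspace m"
    using Mz_star_eq_Mz_adjoint[OF m J df] by (metis image_eqI)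
  have "Mz_row (Mz_adjoint m (delta m f)) \<in> Hspace m"
    by (rule Mz_row_Hspace(1)[OF m Mz_adjoint_HspaceN[OF m df]])
  then have "Mz_star m J (Mz_row (Mz_adjoint m (delta m f)))
      = Mz_adjoint m (Mz_row (Mz_adjoint m (delta m f)))"
    by (rule Mz_star_eq_Mz_adjoint[OF m J])
  also have "\<dots> = Mz_adjoint m f"
    unfolding Mz_row_Mz_adjoint_delta[OF m] Mz_adjoint_eq_iff[OF m] by simp
  finally show "Mz_adjoint m (delta m f) \<in> Mz_star m J ` Hspace m \<and>
      Mz_star m J (Mz_row (Mz_adjoint m (delta m f))) = Mz_adjoint m f"
    using in_image by blast
next
  fix X assume X: "X \<in> Mz_star m J ` Hspace m \<and> Mz_star m J (Mz_row X) = Mz_adjoint m f"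
  then obtain g where g: "g \<in> Hspace m" and X_eq: "X = Mz_adjoint m g"
    using Mz_star_eq_Mz_adjoint[OF m J] by blast
  have "Mz_row X \<in> Hspace m"
    unfolding X_eq by (rule Mz_row_Hspace(1)[OF m Mz_adjoint_HspaceN[OF m g]])
  then have "Mz_adjoint m (Mz_row X) = Mz_adjoint m f"
    using X Mz_star_eq_Mz_adjoint[OF m J] by metis
  then have "Mz_row X = nonconst_part f"
    unfolding Mz_adjoint_eq_iff[OF m] nonconst_part_Mz_row .
  then have "nonconst_part g = nonconst_part (delta m f)"
    using delta_Mz_row_Mz_adjoint[OF m, of g] by (simp add: X_eq delta_nonconst_part)
  then show "X = Mz_adjoint m (delta m f)"
    unfolding X_eq Mz_adjoint_eq_iff[OF m] .
qed

section \<open>The extension \<open>\<delta> M_z\<close>\<close>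

lemma linear_cscale: "complex_structure J \<Longrightarrow> linear (cscale J a)"
  unfolding cscale_def
  by (intro linear_compose_add linear_compose_scale_right linear_ident complex_structure_linear)

lemma Mz_row_cscale:
  assumes "complex_structure J"
  shows "Mz_row (\<lambda>i \<alpha>. cscale J a (F i \<alpha>) + cscale J b (G i \<alpha>))
      = (\<lambda>\<alpha>. cscale J a (Mz_row F \<alpha>) + cscale J b (Mz_row G \<alpha>))"
proof -
  have L: "linear (cscale J c)" for c by (rule linear_cscale[OF assms])
  have "Mzi i (\<lambda>\<alpha>. cscale J a (F i \<alpha>) + cscale J b (G i \<alpha>)) \<alpha>
      = cscale J a (Mzi i (F i) \<alpha>) + cscale J b (Mzi i (G i) \<alpha>)" for i \<alpha>
    by (simp add: Mzi_def linear_0[OF L])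
  then show ?thesis by (simp add: Mz_row_def sum.distrib linear_sum[OF L])
qed

lemma delta_cscale:
  assumes "complex_structure J"
  shows "delta m (\<lambda>\<alpha>. cscale J a (f \<alpha>) + cscale J b (g \<alpha>))
      = (\<lambda>\<alpha>. cscale J a (delta m f \<alpha>) + cscale J b (delta m g \<alpha>))"
  by (auto simp: delta_def linear_scale[OF linear_cscale[OF assms]] scaleR_add_right)

lemma hnorm_delta_Mz_row_le:
  fixes F :: "'n::finite \<Rightarrow> ('n \<Rightarrow> nat) \<Rightarrow> 'd::real_inner"
  assumes m: "m \<ge> 1" and F: "F \<in> HspaceN m"
  shows "hnorm m (delta m (Mz_row F)) \<le> real m * sqrt (real CARD('n)) * hnormN m F"
proof -
  have "hnorm m (delta m (Mz_row F)) \<le> real m * hnorm m (Mz_row F)"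
    by (rule delta_Hspace(2)[OF m Mz_row_Hspace(1)[OF m F]])
  also have "\<dots> \<le> real m * (sqrt (real CARD('n)) * hnormN m F)"
    by (intro mult_left_mono Mz_row_Hspace(2)[OF m F]) simp
  finally show ?thesis by (simp add: mult.assoc)
qed

lemma delta_Mz_row_Mz_star:
  assumes m: "m \<ge> 1" and J: "complex_structure J" and f: "f \<in> Hspace m"
  shows "delta m (Mz_row (Mz_star m J f)) = Mz_row (MzMz_inv m J (Mz_star m J f))"
  by (simp add: Mz_star_eq_Mz_adjoint[OF m J f] MzMz_inv_Mz_adjoint[OF m J f]
      delta_Mz_row_Mz_adjoint[OF m] Mz_row_Mz_adjoint_delta[OF m])

theorem lemma1:
  fixes m :: nat and J :: "'d::{real_inner, complete_space} \<Rightarrow> 'd"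
    and HN :: "('n::finite \<Rightarrow> ('n \<Rightarrow> nat) \<Rightarrow> 'd) set"
  defines "HN \<equiv> HspaceN m"
  assumes m: "m \<ge> 1"
    and J: "complex_structure J"
  shows "(\<forall>f::('n \<Rightarrow> nat) \<Rightarrow> 'd. f \<in> Hspace m \<longrightarrow>
            MzMz_inv m J (Mz_star m J f) = Mz_star m J (delta m f))
    \<and> (\<forall>F\<in>HN. delta m (Mz_row F) \<in> Hspace m)
    \<and> (\<forall>F\<in>HN. \<forall>G\<in>HN. \<forall>a b.
          delta m (Mz_row (\<lambda>i \<alpha>. cscale J a (F i \<alpha>) + cscale J b (G i \<alpha>)))
        = (\<lambda>\<alpha>. cscale J a (delta m (Mz_row F) \<alpha>) + cscale J b (delta m (Mz_row G) \<alpha>)))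
    \<and> (\<exists>C. \<forall>F\<in>HN. hnorm m (delta m (Mz_row F)) \<le> C * hnormN m F)
    \<and> (\<forall>G\<in>Mz_star m J ` (Hspace m :: (('n \<Rightarrow> nat) \<Rightarrow> 'd) set).
          delta m (Mz_row G) = Mz_row (MzMz_inv m J G))"
  unfolding HN_def
proof (intro conjI allI impI ballI)
  fix f :: "('n \<Rightarrow> nat) \<Rightarrow> 'd" assume f: "f \<in> Hspace m"
  show "MzMz_inv m J (Mz_star m J f) = Mz_star m J (delta m f)"
    using MzMz_inv_Mz_adjoint[OF m J f]
    by (simp add: Mz_star_eq_Mz_adjoint[OF m J f] Mz_star_eq_Mz_adjoint[OF m J delta_Hspace(1)[OF m f]])
next
  fix F :: "'n \<Rightarrow> ('n \<Rightarrow> nat) \<Rightarrow> 'd" assume "F \<in> HspaceN m"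
  then show "delta m (Mz_row F) \<in> Hspace m"
    by (intro delta_Hspace(1)[OF m] Mz_row_Hspace(1)[OF m])
next
  fix F G :: "'n \<Rightarrow> ('n \<Rightarrow> nat) \<Rightarrow> 'd" and a b
  show "delta m (Mz_row (\<lambda>i \<alpha>. cscale J a (F i \<alpha>) + cscale J b (G i \<alpha>)))
      = (\<lambda>\<alpha>. cscale J a (delta m (Mz_row F) \<alpha>) + cscale J b (delta m (Mz_row G) \<alpha>))"
    by (simp add: Mz_row_cscale[OF J] delta_cscale[OF J])
next
  show "\<exists>C. \<forall>F\<in>HspaceN m. hnorm m (delta m (Mz_row F)) \<le> C * hnormN m (F :: 'n \<Rightarrow> ('n \<Rightarrow> nat) \<Rightarrow> 'd)"
    using hnorm_delta_Mz_row_le[OF m] by blast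
next
  fix G assume "G \<in> Mz_star m J ` (Hspace m :: (('n \<Rightarrow> nat) \<Rightarrow> 'd) set)"
  then show "delta m (Mz_row G) = Mz_row (MzMz_inv m J G)"
    using delta_Mz_row_Mz_star[OF m J] by blast
qed

end
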